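(* Let $N,\ell$ be sufficiently large positive integers, and suppose $N$ has a prime factor $p$ with $p>2\ell$. Let $m=10\sqrt{\ell}$, let $a$ be an integer, and let $A=\{a,a+1,\ldots,a+m\}$ (the set of integers $a+j$ with $0\le j\le m$). Then $A$ contains an element $b$ such that $b^\ell \not\equiv 1 \pmod N$. *)

theory Defs
  imports Complex_Main "HOL-Number_Theory.Cong"
begin

end

theory Submission
  imports Defs "HOL-Number_Theory.Residues" "HOL-Number_Theory.Modular_Inverse"
begin

(* Suppose every element of the window {a, ..., a + m} is an l-th root of unity modulo the prime
   p > 2l. These roots form a subgroup G of (Z/p)^* with at most l < (p - 1)/2 elements.

   If p <= m^2/2, every integer c from about p/m up to m maps some element of the window back into
   the window modulo p (multiplication by c moves in steps shorter than the window), so c lies in G.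
   Halving then puts all of 1, ..., m into G. The least positive non-element q of G satisfies
   q(q - 1) < p: the number q * ceil(p/q) - p is positive and below q, so it lies in G, and then
   ceil(p/q) < q would force q into G. As q > m, G would contain every unit, which is too many.

   If p > m^2/2, take M about m/2 and look at the (M + 1)^2 ratios (a + i)/(a + j) mod p,
   0 <= i, j <= M. They lie in G, so take at most l values. A value taken twice equals a reduced
   fraction u/v with |u|, v <= M, and the pairs (i, j) taking it lie on a line of direction (u, v),
   so there are at most M/max(|u|, v) + 1 of them. Summing over the values taken more than 8 times
   gives (M + 1)^2 <= 8l + (17/32) M^2 + M/8, which fails for M about 5 sqrt l. *)

lemma cong_mult_shift_into_window:
  fixes p x m c :: int
  assumes "0 < p" "0 < c" "c \<le> m + 1" "p - 1 \<le> (c - 1) * m"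
  shows "\<exists>i j. 0 \<le> i \<and> i \<le> m \<and> 0 \<le> j \<and> j \<le> m \<and> [c * (x + i) = x + j] (mod p)"
proof -
  define D where "D = (x - c * x) mod p"
  (* i is the least index with c * i >= D; as c <= m + 1, j = c * i - D then stays in {0..m}. *)
  define i where "i = (D + c - 1) div c"
  define j where "j = c * i - D"
  have D: "0 \<le> D" "D \<le> p - 1" unfolding D_def using assms by auto
  have "D + c - 1 = c * i + (D + c - 1) mod c" "0 \<le> (D + c - 1) mod c" "(D + c - 1) mod c < c"
    unfolding i_def using assms(2) by simp_all
  then have ci: "c * i \<le> D + c - 1" "D \<le> c * i" by linarith+
  have "i \<le> m"
  proof -
    have "c * i \<le> (c - 1) * m + c - 1" using ci D assms(4) by linarith
    also have "\<dots> = c * (m + 1) - (m + 1)" by (simp add: algebra_simps)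
    also have "\<dots> < c * (m + 1)" using assms(2,3) by linarith
    finally have "c * i < c * (m + 1)" .
    then show ?thesis using assms(2) by (simp add: mult_less_cancel_left_pos)
  qed
  moreover have "0 \<le> i" unfolding i_def using assms(2) D by (simp add: pos_imp_zdiv_nonneg_iff)
  moreover have "[c * (x + i) = x + j] (mod p)"
  proof -
    have "[D = x - c * x] (mod p)" unfolding D_def by (simp add: cong_def)
    then have "[x + c * i - (x - c * x) = x + c * i - D] (mod p)"
      by (intro cong_diff cong_refl) (rule cong_sym)
    then show ?thesis unfolding j_def by (simp add: algebra_simps)
  qed
  moreover have "0 \<le> j" "j \<le> m" unfolding j_def using ci assms(3) by linarith+
  ultimately show ?thesis by blast
qed

(* G is the set of integers whose residues form a subgroup of (Z/p)^*; closure under quotients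
   (cancel) is the subgroup criterion. *)
locale residue_subgroup =
  fixes p :: int and G :: "int set"
  assumes prime: "prime p"
    and cong_closed: "[a = b] (mod p) \<Longrightarrow> a \<in> G \<Longrightarrow> b \<in> G"
    and cancel: "a \<in> G \<Longrightarrow> a * b \<in> G \<Longrightarrow> b \<in> G"
    and not_dvd: "a \<in> G \<Longrightarrow> \<not> p dvd a"
begin

lemma gt_1: "1 < p"
  using prime by (rule prime_gt_1_int)

lemma multiplier_mem:
  assumes window: "{x..x + m} \<subseteq> G" and "0 < c" "c \<le> m + 1" "p - 1 \<le> (c - 1) * m"
  shows "c \<in> G"
proof -
  obtain i j where "0 \<le> i" "i \<le> m" "0 \<le> j" "j \<le> m" and cong: "[c * (x + i) = x + j] (mod p)"
    using cong_mult_shift_into_window[of p c m x] gt_1 assms(2-4) by auto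
  then have "x + i \<in> G" "x + j \<in> G" using window by auto
  then have "(x + i) * c \<in> G" using cong_closed[OF cong_sym[OF cong]] by (simp add: mult.commute)
  then show ?thesis using cancel \<open>x + i \<in> G\<close> by blast
qed

lemma interval_subset_from_upper_half:
  assumes upper: "{u..m} \<subseteq> G" and "1 \<le> u" "2 * u \<le> m"
  shows "{1..m} \<subseteq> G"
proof
  have "u \<in> G" "u * 2 \<in> G" using upper assms(2,3) by auto
  then have "2 \<in> G" by (rule cancel)
  fix n assume "n \<in> {1..m}"
  then show "n \<in> G"
  proof (induction "nat (u - n)" arbitrary: n rule: less_induct)
    case (less n)
    show ?case
    proof (cases "u \<le> n")
      case True
      then show ?thesis using upper less.prems by auto
    next
      case False
      then have "2 * n \<in> G" using less assms(3) by force
      then show ?thesis using cancel[of 2 n] \<open>2 \<in> G\<close> by blast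
    qed
  qed
qed

lemma least_nonmember_square_le:
  assumes "1 \<le> q" "q < p" "q \<notin> G" and below: "{1..<q} \<subseteq> G"
  shows "q * (q - 1) \<le> p - 1"
proof (cases "q = 1")
  case False
  define r where "r = (p - 1) div q + 1"
  have "p - 1 = q * ((p - 1) div q) + (p - 1) mod q" "0 \<le> (p - 1) mod q" "(p - 1) mod q < q"
    using assms(1) by simp_all
  moreover have "q * r = q * ((p - 1) div q) + q" unfolding r_def by (simp add: algebra_simps)
  ultimately have div: "q * ((p - 1) div q) \<le> p - 1" "p - 1 < q * r" by linarith+
  have "q * r \<noteq> p"
  proof
    assume "q * r = p"
    then have "q dvd p" by (metis dvd_triv_left)
    then have "q = 1 \<or> q = p" using prime assms(1) unfolding prime_int_iff by simp
    then show False using False assms(2) by simp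
  qed
  then have "q * r - p \<in> {1..<q}" using div unfolding r_def by (auto simp: algebra_simps)
  then have "r * q \<in> G"
    using below cong_closed[of "q * r - p" "r * q"] by (auto simp: cong_iff_dvd_diff)
  moreover have "1 \<le> r" unfolding r_def using gt_1 assms(1) by (simp add: pos_imp_zdiv_nonneg_iff)
  ultimately have "q \<le> r" using below cancel \<open>q \<notin> G\<close> by (meson atLeastLessThan_iff not_le subsetD)
  then have "q * (q - 1) \<le> q * ((p - 1) div q)" unfolding r_def using assms(1) by simp
  then show ?thesis using div by linarith
qed (use gt_1 in simp)

lemma initial_segment_subset_imp_units_subset:
  assumes initial: "{1..m} \<subseteq> G" and "0 \<le> m" "p - 1 < (m + 1) * m"
  shows "{1..<p} \<subseteq> G"
proof (rule ccontr)
  define S where "S = {1..<p} - G"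
  define q where "q = Min S"
  assume "\<not> {1..<p} \<subseteq> G"
  then have "finite S" "S \<noteq> {}" unfolding S_def by auto
  then have "q \<in> S" unfolding q_def by (rule Min_in)
  have below: "{1..<q} \<subseteq> G"
  proof
    fix n assume n: "n \<in> {1..<q}"
    show "n \<in> G"
    proof (rule ccontr)
      assume "n \<notin> G"
      then have "n \<in> S" using n \<open>q \<in> S\<close> unfolding S_def by auto
      then show False using Min_le[OF \<open>finite S\<close>] n unfolding q_def by fastforce
    qed
  qed
  have "q * (q - 1) \<le> p - 1"
    using \<open>q \<in> S\<close> below unfolding S_def by (intro least_nonmember_square_le) auto
  moreover have "m < q"
    using initial \<open>q \<in> S\<close> unfolding S_def by (meson atLeastAtMost_iff atLeastLessThan_iff DiffE not_le subsetD)
  then have "(m + 1) * m \<le> q * (q - 1)" using \<open>0 \<le> m\<close> by (intro mult_mono) auto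
  ultimately show False using assms(3) by linarith
qed

lemma window_subset_imp_units_subset:
  assumes window: "{x..x + m} \<subseteq> G" and "0 < m" and modulus: "2 * (p - 1) \<le> m * (m - 4)"
  shows "{1..<p} \<subseteq> G"
proof -
  define u where "u = (p - 1) div m + 2"
  have "m * ((p - 1) div m) + (p - 1) mod m = p - 1" by (rule mult_div_mod_eq)
  moreover have "0 \<le> (p - 1) mod m" "(p - 1) mod m < m" using \<open>0 < m\<close> by simp_all
  ultimately have div: "m * ((p - 1) div m) \<le> p - 1" "p - 1 < m * ((p - 1) div m) + m" by linarith+
  have "0 \<le> (p - 1) div m" using gt_1 \<open>0 < m\<close> by (simp add: pos_imp_zdiv_nonneg_iff)
  then have "1 \<le> u" unfolding u_def by simp
  have "m * (2 * u) = 2 * (m * ((p - 1) div m)) + 4 * m" unfolding u_def by (simp add: algebra_simps)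
  also have "\<dots> \<le> m * m" using div modulus by (simp add: right_diff_distrib)
  finally have "2 * u \<le> m" using \<open>0 < m\<close> by simp
  have "{u..m} \<subseteq> G"
  proof
    fix c assume c: "c \<in> {u..m}"
    have "(u - 1) * m = m * ((p - 1) div m) + m" unfolding u_def by (simp add: algebra_simps)
    then have "p - 1 \<le> (u - 1) * m" using div by linarith
    also have "\<dots> \<le> (c - 1) * m" using c \<open>0 < m\<close> by (intro mult_right_mono) auto
    finally show "c \<in> G" using c \<open>1 \<le> u\<close> by (intro multiplier_mem[OF window]) auto
  qed
  then have "{1..m} \<subseteq> G" using \<open>1 \<le> u\<close> \<open>2 * u \<le> m\<close> by (rule interval_subset_from_upper_half)
  moreover have "(m + 1) * m = m * m + m" "m * (m - 4) = m * m - 4 * m" by (simp_all add: algebra_simps)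
  then have "p - 1 < (m + 1) * m" using modulus \<open>0 < m\<close> by (smt (verit) zero_le_square)
  ultimately show ?thesis using \<open>0 < m\<close> by (intro initial_segment_subset_imp_units_subset) auto
qed

end

(* The residue of u/v in {0..<p}; junk unless v is coprime to p. *)
definition ratio_mod :: "int \<Rightarrow> int \<Rightarrow> int \<Rightarrow> int" where
  "ratio_mod p u v = (u * modular_inverse p v) mod p"

lemma ratio_mod_eq_iff:
  assumes "coprime v p" "coprime v' p"
  shows "ratio_mod p u v = ratio_mod p u' v' \<longleftrightarrow> [u * v' = u' * v] (mod p)"
proof -
  define w w' where "w = modular_inverse p v" and "w' = modular_inverse p v'"
  have inv: "[v * w = 1] (mod p)" "[v' * w' = 1] (mod p)"
    unfolding w_def w'_def using assms by (auto intro: cong_modular_inverse1)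
  have "[u * w * (v * v') = u * v' * (v * w)] (mod p)" "[u' * w' * (v * v') = u' * v * (v' * w')] (mod p)"
    by (simp_all add: ac_simps)
  moreover have "[u * v' * (v * w) = u * v'] (mod p)" "[u' * v * (v' * w') = u' * v] (mod p)"
    using cong_mult[OF cong_refl inv(1), of "u * v'"] cong_mult[OF cong_refl inv(2), of "u' * v"] by simp_all
  ultimately have reduce: "[u * w * (v * v') = u * v'] (mod p)" "[u' * w' * (v * v') = u' * v] (mod p)"
    by (blast intro: cong_trans)+
  have "ratio_mod p u v = ratio_mod p u' v' \<longleftrightarrow> [u * w = u' * w'] (mod p)"
    unfolding ratio_mod_def w_def w'_def cong_def ..
  also have "\<dots> \<longleftrightarrow> [u * w * (v * v') = u' * w' * (v * v')] (mod p)"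
    using assms by (simp add: cong_mult_rcancel)
  also have "\<dots> \<longleftrightarrow> [u * v' = u' * v] (mod p)"
    using reduce by (meson cong_sym cong_trans)
  finally show ?thesis .
qed

lemma (in residue_subgroup) ratio_mod_mem:
  assumes "u \<in> G" "v \<in> G"
  shows "ratio_mod p u v \<in> G"
proof -
  have "coprime v p" using not_dvd[OF assms(2)] prime by (simp add: prime_imp_coprime coprime_commute)
  then have "[v * modular_inverse p v = 1] (mod p)" by (rule cong_modular_inverse1)
  then have "[u * (v * modular_inverse p v) = u] (mod p)" using cong_scalar_left by fastforce
  then have "[v * ratio_mod p u v = u] (mod p)"
    unfolding ratio_mod_def by (simp add: cong_def mod_mult_right_eq ac_simps)
  then have "v * ratio_mod p u v \<in> G" using assms(1) cong_closed cong_sym by blast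
  then show ?thesis using cancel assms(2) by blast
qed

lemma cong_eq_if_abs_diff_less:
  fixes a b p :: int
  assumes "[a = b] (mod p)" "\<bar>a - b\<bar> < p"
  shows "a = b"
proof (rule ccontr)
  assume "a \<noteq> b"
  moreover have "p dvd a - b" using assms(1) by (simp add: cong_iff_dvd_diff)
  ultimately have "\<bar>p\<bar> \<le> \<bar>a - b\<bar>" using dvd_imp_le_int by simp
  then show False using assms(2) by linarith
qed

lemma card_dvd_diff_subset_le:
  fixes S :: "int set" and d M :: int
  assumes "S \<subseteq> {0..M}" "0 \<le> M" "0 < d" and dvd: "\<And>s t. s \<in> S \<Longrightarrow> t \<in> S \<Longrightarrow> d dvd s - t"
  shows "int (card S) \<le> M div d + 1"
proof -
  have "inj_on (\<lambda>s. s div d) S"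
  proof (rule inj_onI)
    fix s t assume "s \<in> S" "t \<in> S" "s div d = t div d"
    moreover from dvd[OF \<open>s \<in> S\<close> \<open>t \<in> S\<close>] have "s mod d = t mod d" by (simp add: mod_eq_dvd_iff)
    ultimately show "s = t" by (metis div_mult_mod_eq)
  qed
  moreover have "(\<lambda>s. s div d) ` S \<subseteq> {0..M div d}"
    using assms(1,3) by (auto simp: pos_imp_zdiv_nonneg_iff zdiv_mono1)
  ultimately have "card S \<le> card {0..M div d}"
    by (metis card_image card_mono finite_atLeastAtMost_int)
  moreover have "0 \<le> M div d" using assms(2,3) by (simp add: pos_imp_zdiv_nonneg_iff)
  ultimately show ?thesis by (simp add: of_nat_le_iff[symmetric, where 'a = int])
qed

lemma card_on_line_le:
  fixes S :: "(int \<times> int) set" and a b M :: int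
  assumes S: "S \<subseteq> {0..M} \<times> {0..M}" and "0 \<le> M" "coprime a b" "0 < b"
    and line: "\<And>e e'. e \<in> S \<Longrightarrow> e' \<in> S \<Longrightarrow> b * (fst e - fst e') = a * (snd e - snd e')"
  shows "int (card S) \<le> M div max \<bar>a\<bar> b + 1"
proof -
  have "int (card S) \<le> M div b + 1"
  proof -
    have "inj_on snd S"
      by (rule inj_onI) (use line \<open>0 < b\<close> in \<open>fastforce simp: prod_eq_iff\<close>)
    moreover have "int (card (snd ` S)) \<le> M div b + 1"
    proof (rule card_dvd_diff_subset_le)
      fix s t assume "s \<in> snd ` S" "t \<in> snd ` S"
      then obtain e e' where "e \<in> S" "e' \<in> S" "s = snd e" "t = snd e'" by blast
      then have "b dvd a * (s - t)" using line by (metis dvd_triv_left)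
      then show "b dvd s - t" using \<open>coprime a b\<close> by (simp add: coprime_commute coprime_dvd_mult_right_iff)
    qed (use S assms(2,4) in auto)
    ultimately show ?thesis by (simp add: card_image)
  qed
  moreover have "int (card S) \<le> M div \<bar>a\<bar> + 1" if "a \<noteq> 0"
  proof -
    have "inj_on fst S"
      by (rule inj_onI) (use line \<open>a \<noteq> 0\<close> in \<open>fastforce simp: prod_eq_iff\<close>)
    moreover have "int (card (fst ` S)) \<le> M div \<bar>a\<bar> + 1"
    proof (rule card_dvd_diff_subset_le)
      fix s t assume "s \<in> fst ` S" "t \<in> fst ` S"
      then obtain e e' where "e \<in> S" "e' \<in> S" "s = fst e" "t = fst e'" by blast
      then have "a dvd b * (s - t)" using line by (metis dvd_triv_left)
      then show "\<bar>a\<bar> dvd s - t" using \<open>coprime a b\<close> by (simp add: coprime_dvd_mult_right_iff)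
    qed (use S assms(2) that in auto)
    ultimately show ?thesis by (simp add: card_image)
  qed
  ultimately show ?thesis using \<open>0 < b\<close> by (cases "\<bar>a\<bar> \<le> b") (auto simp: max_def)
qed

lemma sum_inverse_max_abs_le:
  "(\<Sum>d\<in>{-int n..int n} \<times> {1..int n}. 1 / real_of_int (max \<bar>fst d\<bar> (snd d))) \<le> 4 * real n"
proof (induction n)
  case (Suc n)
  define T where "T k = {-int k..int k} \<times> {1..int k}" for k
  define f where "f d = 1 / real_of_int (max \<bar>fst d\<bar> (snd d))" for d :: "int \<times> int"
  have sub: "T n \<subseteq> T (Suc n)" and fin: "finite (T (Suc n))" unfolding T_def by auto
  have card_T: "card (T k) = (2 * k + 1) * k" for k
    unfolding T_def card_cartesian_product by (simp add: nat_add_distrib nat_mult_distrib)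
  have shell: "f d = 1 / real (Suc n)" if "d \<in> T (Suc n) - T n" for d
  proof -
    have "max \<bar>fst d\<bar> (snd d) = int n + 1" using that unfolding T_def by (auto simp: mem_Times_iff)
    then show ?thesis unfolding f_def by simp
  qed
  have "sum f (T (Suc n)) = sum f (T (Suc n) - T n) + sum f (T n)"
    using sum.subset_diff[OF sub fin] .
  also have "sum f (T (Suc n) - T n) = real (card (T (Suc n)) - card (T n)) / real (Suc n)"
    using shell sub fin by (simp add: card_Diff_subset finite_subset)
  also have "card (T (Suc n)) - card (T n) = 4 * n + 3" unfolding card_T by (simp add: algebra_simps)
  also have "real (4 * n + 3) / real (Suc n) \<le> 4" by (simp add: field_simps)
  finally show ?case using Suc.IH unfolding f_def T_def by simp
qed simp

lemma sum_scaled_inverse_max_abs_le: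
  fixes M H :: int
  assumes "0 \<le> M" "0 \<le> H"
  shows "(\<Sum>d\<in>{-H..H} \<times> {1..H}. M / max \<bar>fst d\<bar> (snd d) + 1) \<le> real_of_int (4 * M * H + (2 * H + 1) * H)"
proof -
  define W where "W = {-H..H} \<times> {1..H}"
  have "(\<Sum>d\<in>W. 1 / max \<bar>fst d\<bar> (snd d)) \<le> 4 * real_of_int H"
    using sum_inverse_max_abs_le[of "nat H"] assms(2) unfolding W_def by simp
  then have "M * (\<Sum>d\<in>W. 1 / max \<bar>fst d\<bar> (snd d)) \<le> M * (4 * real_of_int H)"
    using assms(1) by (intro mult_left_mono) auto
  moreover have "int (card W) = (2 * H + 1) * H"
    unfolding W_def card_cartesian_product using assms(2) by simp
  then have "real (card W) = real_of_int ((2 * H + 1) * H)" by (metis of_int_of_nat_eq)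
  moreover have "(\<Sum>d\<in>W. M / max \<bar>fst d\<bar> (snd d) + 1) = M * (\<Sum>d\<in>W. 1 / max \<bar>fst d\<bar> (snd d)) + card W"
    by (simp add: sum.distrib sum_distrib_left)
  ultimately show ?thesis unfolding W_def[symmetric] by simp
qed

definition ratio_fiber :: "int \<Rightarrow> int \<Rightarrow> int \<Rightarrow> int \<Rightarrow> (int \<times> int) set" where
  "ratio_fiber p x M r = {e \<in> {0..M} \<times> {0..M}. ratio_mod p (x + fst e) (x + snd e) = r}"

context
  fixes p x M :: int
  assumes p_prime: "prime p"
    and window_coprime: "\<And>i. 0 \<le> i \<Longrightarrow> i \<le> M \<Longrightarrow> coprime (x + i) p"
    and small_window: "2 * M * M < p"
begin

lemma window_less_p: "M < p"
proof (cases "0 < M")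
  case True
  then have "M * 1 \<le> M * M" by (intro mult_left_mono) auto
  moreover have "2 * M * M = M * M + M * M" by simp
  ultimately show ?thesis using small_window True by linarith
qed (use prime_gt_1_int[OF p_prime] in simp)

lemma coprime_if_le_window:
  assumes "0 < g" "g \<le> M"
  shows "coprime g p"
proof -
  have "g < p" using assms window_less_p by linarith
  then have "\<not> p dvd g" using assms zdvd_not_zless by blast
  then show ?thesis using p_prime by (metis prime_imp_coprime coprime_commute)
qed

lemma mem_ratio_fiber_iff:
  assumes "coprime b p"
  shows "e \<in> ratio_fiber p x M (ratio_mod p a b) \<longleftrightarrow>
    e \<in> {0..M} \<times> {0..M} \<and> [(x + fst e) * b = a * (x + snd e)] (mod p)"
proof -
  have "ratio_mod p (x + fst e) (x + snd e) = ratio_mod p a b \<longleftrightarrow> [(x + fst e) * b = a * (x + snd e)] (mod p)"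
    if "e \<in> {0..M} \<times> {0..M}"
  proof (rule ratio_mod_eq_iff)
    show "coprime (x + snd e) p" using that window_coprime by (auto simp: mem_Times_iff)
  qed (rule assms)
  then show ?thesis unfolding ratio_fiber_def by blast
qed

lemma ratio_fiber_on_line:
  assumes "e \<in> ratio_fiber p x M (ratio_mod p a b)" "e' \<in> ratio_fiber p x M (ratio_mod p a b)"
    and "\<bar>a\<bar> \<le> M" "0 < b" "b \<le> M"
  shows "b * (fst e - fst e') = a * (snd e - snd e')"
proof (rule cong_eq_if_abs_diff_less)
  have "coprime b p" using assms(4,5) by (rule coprime_if_le_window)
  then have mem: "e \<in> {0..M} \<times> {0..M}" "e' \<in> {0..M} \<times> {0..M}"
    and "[(x + fst e) * b = a * (x + snd e)] (mod p)" "[(x + fst e') * b = a * (x + snd e')] (mod p)"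
    using assms(1,2) mem_ratio_fiber_iff by blast+
  then have "[(x + fst e) * b - (x + fst e') * b = a * (x + snd e) - a * (x + snd e')] (mod p)"
    using cong_diff by blast
  then show "[b * (fst e - fst e') = a * (snd e - snd e')] (mod p)"
    by (simp add: algebra_simps)
  have "\<bar>fst e - fst e'\<bar> \<le> M" "\<bar>snd e - snd e'\<bar> \<le> M" using mem by (auto simp: mem_Times_iff)
  then have "\<bar>b * (fst e - fst e')\<bar> \<le> M * M" "\<bar>a * (snd e - snd e')\<bar> \<le> M * M"
    using assms(3-5) unfolding abs_mult by (simp_all add: mult_mono)
  then show "\<bar>b * (fst e - fst e') - a * (snd e - snd e')\<bar> < p" using small_window by linarith
qed

lemma card_ratio_fiber_le:
  assumes "coprime a b" "\<bar>a\<bar> \<le> M" "0 < b" "b \<le> M"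
  shows "int (card (ratio_fiber p x M (ratio_mod p a b))) \<le> M div max \<bar>a\<bar> b + 1"
proof (rule card_on_line_le)
  show "ratio_fiber p x M (ratio_mod p a b) \<subseteq> {0..M} \<times> {0..M}" unfolding ratio_fiber_def by blast
qed (use assms ratio_fiber_on_line in auto)

lemma ratio_fiber_reduced_fraction_ordered:
  assumes "(i, j) \<in> ratio_fiber p x M r" "(i', j') \<in> ratio_fiber p x M r" "j < j'"
  shows "\<exists>a b. coprime a b \<and> \<bar>a\<bar> \<le> M \<and> 0 < b \<and> b \<le> M \<and> r = ratio_mod p a b"
proof -
  define g where "g = gcd (i' - i) (j' - j)"
  define a b where "a = (i' - i) div g" and "b = (j' - j) div g"
  have box: "0 \<le> i" "i \<le> M" "0 \<le> j" "j \<le> M" "0 \<le> i'" "i' \<le> M" "0 \<le> j'" "j' \<le> M"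
    using assms(1,2) unfolding ratio_fiber_def by auto
  have "0 < g" unfolding g_def using assms(3) by simp
  have shift: "i' - i = a * g" "j' - j = b * g" unfolding a_def b_def g_def by simp_all
  have "coprime a b" unfolding a_def b_def g_def using assms(3) by (intro div_gcd_coprime) simp
  have "0 < b * g" using shift(2) assms(3) by simp
  then have "0 < b" using \<open>0 < g\<close> by (simp add: zero_less_mult_iff)
  have "b * 1 \<le> b * g" "1 * g \<le> b * g" "\<bar>a\<bar> * 1 \<le> \<bar>a\<bar> * g"
    using \<open>0 < b\<close> \<open>0 < g\<close> by (intro mult_left_mono mult_right_mono; simp)+
  moreover have "\<bar>a\<bar> * g = \<bar>i' - i\<bar>" using shift(1) \<open>0 < g\<close> by (simp add: abs_mult)
  ultimately have "b \<le> M" "g \<le> M" "\<bar>a\<bar> \<le> M"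
    using shift(2) box by linarith+
  have "r = ratio_mod p (x + i) (x + j)" "r = ratio_mod p (x + i') (x + j')"
    using assms(1,2) unfolding ratio_fiber_def by auto
  then have "[(x + i) * (x + j') = (x + i') * (x + j)] (mod p)"
    using ratio_mod_eq_iff window_coprime box by metis
  moreover have "(x + i) * (x + j') - (x + i') * (x + j) = g * ((x + i) * b) - g * (a * (x + j))"
    using shift by (simp add: algebra_simps)
  ultimately have "[g * ((x + i) * b) = g * (a * (x + j))] (mod p)"
    by (simp add: cong_iff_dvd_diff)
  then have "[(x + i) * b = a * (x + j)] (mod p)"
    using coprime_if_le_window[OF \<open>0 < g\<close> \<open>g \<le> M\<close>] by (simp add: cong_mult_lcancel)
  then have "(i, j) \<in> ratio_fiber p x M (ratio_mod p a b)"
    using mem_ratio_fiber_iff coprime_if_le_window[OF \<open>0 < b\<close> \<open>b \<le> M\<close>] box by auto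
  then have "r = ratio_mod p a b" using assms(1) unfolding ratio_fiber_def by auto
  then show ?thesis using \<open>coprime a b\<close> \<open>\<bar>a\<bar> \<le> M\<close> \<open>0 < b\<close> \<open>b \<le> M\<close> by blast
qed

lemma ratio_fiber_reduced_fraction:
  assumes "e \<in> ratio_fiber p x M r" "e' \<in> ratio_fiber p x M r" "e \<noteq> e'"
  shows "\<exists>a b. coprime a b \<and> \<bar>a\<bar> \<le> M \<and> 0 < b \<and> b \<le> M \<and> r = ratio_mod p a b"
proof -
  obtain i j i' j' where e: "e = (i, j)" "e' = (i', j')" by fastforce
  consider "j < j'" | "j' < j" | "j = j'" by linarith
  then show ?thesis
  proof cases
    case 3
    have box: "0 \<le> i" "i \<le> M" "0 \<le> j" "j \<le> M" "0 \<le> i'" "i' \<le> M"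
      using assms(1,2) unfolding e ratio_fiber_def by auto
    have "r = ratio_mod p (x + i) (x + j)" "r = ratio_mod p (x + i') (x + j)"
      using assms(1,2) 3 unfolding e ratio_fiber_def by auto
    then have "[(x + i) * (x + j) = (x + i') * (x + j)] (mod p)"
      using ratio_mod_eq_iff window_coprime box by metis
    then have "[x + i = x + i'] (mod p)" using window_coprime box by (simp add: cong_mult_rcancel)
    moreover have "\<bar>(x + i) - (x + i')\<bar> < p" using box window_less_p by linarith
    ultimately have "i = i'" using cong_eq_if_abs_diff_less by fastforce
    then show ?thesis using assms(3) 3 e by simp
  qed (use assms ratio_fiber_reduced_fraction_ordered e in blast)+
qed

lemma large_ratio_fiber_bound:
  assumes "T < card (ratio_fiber p x M r)" "0 < T"
  shows "\<exists>d \<in> {-(M div T)..M div T} \<times> {1..M div T}. r = ratio_mod p (fst d) (snd d) \<and>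
           real (card (ratio_fiber p x M r)) \<le> M / max \<bar>fst d\<bar> (snd d) + 1"
proof -
  have "finite (ratio_fiber p x M r)" unfolding ratio_fiber_def by simp
  moreover have "\<not> card (ratio_fiber p x M r) \<le> Suc 0" using assms by linarith
  ultimately obtain e e' where "e \<in> ratio_fiber p x M r" "e' \<in> ratio_fiber p x M r" "e \<noteq> e'"
    by (auto simp: card_le_Suc0_iff_eq)
  then obtain a b where ab: "coprime a b" "\<bar>a\<bar> \<le> M" "0 < b" "b \<le> M" "r = ratio_mod p a b"
    using ratio_fiber_reduced_fraction by blast
  define h where "h = max \<bar>a\<bar> b"
  have "0 < h" unfolding h_def using ab by simp
  have card: "int (card (ratio_fiber p x M r)) \<le> M div h + 1"
    using card_ratio_fiber_le ab unfolding h_def by blast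
  then have "int T \<le> M div h" using assms(1) by linarith
  then have "int T * h \<le> M div h * h" using \<open>0 < h\<close> by simp
  also have "\<dots> \<le> M" using \<open>0 < h\<close> minus_mod_eq_div_mult[of M h] pos_mod_sign[of h M] by linarith
  finally have "(int T * h) div int T \<le> M div int T" using assms(2) by (intro zdiv_mono1) auto
  then have "h \<le> M div int T" using assms(2) by simp
  moreover have "real (card (ratio_fiber p x M r)) \<le> M / h + 1"
    using card real_of_int_div4[of M h] by linarith
  ultimately show ?thesis using ab unfolding h_def by (intro bexI[of _ "(a, b)"]) auto
qed

(* No injectivity argument is needed for the large fibres: the reduced fraction d determines the
   value ratio_mod p (fst d) (snd d) of its fibre, which is all that sum_le_included asks for. *)
lemma window_ratio_count:
  assumes "0 < T" "0 \<le> M"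
  defines "R \<equiv> (\<lambda>e. ratio_mod p (x + fst e) (x + snd e)) ` ({0..M} \<times> {0..M})" and "H \<equiv> M div int T"
  shows "real_of_int ((M + 1)\<^sup>2) \<le> T * real (card R) + real_of_int (4 * M * H + (2 * H + 1) * H)"
proof -
  define F where "F r = real (card (ratio_fiber p x M r))" for r
  define Rb where "Rb = {r \<in> R. T < card (ratio_fiber p x M r)}"
  have "0 \<le> H" unfolding H_def using assms(1,2) by (simp add: pos_imp_zdiv_nonneg_iff)
  have "finite R" unfolding R_def by simp
  have "int (card ({0..M} \<times> {0..M})) = (M + 1)\<^sup>2"
    using assms(2) by (simp add: card_cartesian_product power2_eq_square)
  then have "real_of_int ((M + 1)\<^sup>2) = real (card ({0..M} \<times> {0..M}))" by (metis of_int_of_nat_eq)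
  also have "card ({0..M} \<times> {0..M}) = (\<Sum>r\<in>R. card (ratio_fiber p x M r))"
    unfolding R_def ratio_fiber_def using sum.image_gen[of "{0..M} \<times> {0..M}" "\<lambda>_. 1::nat"] by simp
  also have "real \<dots> = (\<Sum>r\<in>R - Rb. F r) + (\<Sum>r\<in>Rb. F r)"
    using sum.subset_diff[of Rb R F] \<open>finite R\<close> unfolding Rb_def F_def by auto
  finally have total: "real_of_int ((M + 1)\<^sup>2) = (\<Sum>r\<in>R - Rb. F r) + (\<Sum>r\<in>Rb. F r)" .
  have "(\<Sum>r\<in>R - Rb. F r) \<le> real (card (R - Rb)) * T"
    by (rule sum_bounded_above) (auto simp: Rb_def F_def)
  also have "\<dots> \<le> real (card R) * T"
    using \<open>finite R\<close> by (intro mult_right_mono) (auto intro: card_mono)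
  finally have small: "(\<Sum>r\<in>R - Rb. F r) \<le> T * real (card R)" by (simp add: mult.commute)
  have "(\<Sum>r\<in>Rb. F r) \<le> (\<Sum>d\<in>{-H..H} \<times> {1..H}. M / max \<bar>fst d\<bar> (snd d) + 1)"
  proof (rule sum_le_included[where i = "\<lambda>d. ratio_mod p (fst d) (snd d)"])
    show "finite Rb" using \<open>finite R\<close> unfolding Rb_def by simp
    show "\<forall>d\<in>{-H..H} \<times> {1..H}. 0 \<le> M / max \<bar>fst d\<bar> (snd d) + 1" using assms(2) by auto
    show "\<forall>r\<in>Rb. \<exists>d\<in>{-H..H} \<times> {1..H}. ratio_mod p (fst d) (snd d) = r \<and> F r \<le> M / max \<bar>fst d\<bar> (snd d) + 1"
      using large_ratio_fiber_bound assms(1) unfolding Rb_def F_def H_def by force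
  qed simp
  also have "\<dots> \<le> real_of_int (4 * M * H + (2 * H + 1) * H)"
    using assms(2) \<open>0 \<le> H\<close> by (rule sum_scaled_inverse_max_abs_le)
  finally show ?thesis using total small by simp
qed

end

lemma (in residue_subgroup) window_subset_imp_count_bound:
  assumes window: "{x..x + M} \<subseteq> G" and "0 \<le> M" "2 * M * M < p" "0 < T"
  shows "real_of_int ((M + 1)\<^sup>2) \<le> T * real (card (G \<inter> {0..<p}))
           + real_of_int (4 * M * (M div int T) + (2 * (M div int T) + 1) * (M div int T))"
proof -
  define R where "R = (\<lambda>e. ratio_mod p (x + fst e) (x + snd e)) ` ({0..M} \<times> {0..M})"
  have "coprime (x + i) p" if "0 \<le> i" "i \<le> M" for i
  proof -
    have "x + i \<in> G" using window that by auto
    then show ?thesis using not_dvd prime by (metis prime_imp_coprime coprime_commute)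
  qed
  then have "real_of_int ((M + 1)\<^sup>2) \<le> T * real (card R)
      + real_of_int (4 * M * (M div int T) + (2 * (M div int T) + 1) * (M div int T))"
    unfolding R_def by (rule window_ratio_count[OF prime _ assms(3,4,2)])
  moreover have "R \<subseteq> G \<inter> {0..<p}"
  proof
    fix r assume "r \<in> R"
    then obtain i j where "i \<in> {0..M}" "j \<in> {0..M}" "r = ratio_mod p (x + i) (x + j)"
      unfolding R_def by auto
    moreover from this have "x + i \<in> G" "x + j \<in> G" using window by auto
    ultimately show "r \<in> G \<inter> {0..<p}" using ratio_mod_mem gt_1 by (simp add: ratio_mod_def)
  qed
  then have "card R \<le> card (G \<inter> {0..<p})" by (rule card_mono[rotated]) simp
  then have "T * real (card R) \<le> T * real (card (G \<inter> {0..<p}))" by (simp add: mult_left_mono)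
  ultimately show ?thesis by linarith
qed

lemma half_window_square_less:
  fixes m p :: int
  assumes "10 \<le> m" "m * (m - 4) < 2 * (p - 1)"
  shows "2 * ((m - 9) div 2) * ((m - 9) div 2) < p"
proof -
  define M where "M = (m - 9) div 2"
  have "0 \<le> 2 * M" "2 * M \<le> m - 9" unfolding M_def using assms(1) by linarith+
  then have "(2 * M) * (2 * M) \<le> (m - 9) * (m - 9)" by (intro mult_mono) auto
  moreover have "(m - 9) * (m - 9) = m * (m - 4) - 14 * m + 81" by (simp add: algebra_simps)
  ultimately have "4 * (M * M) < 2 * p" using assms by (simp add: algebra_simps)
  then show ?thesis unfolding M_def[symmetric] by simp
qed

lemma window_count_bound_fails:
  fixes M :: int and l :: nat
  assumes "49 * sqrt l \<le> 10 * M"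
  shows "8 * real l + real_of_int (4 * M * (M div 8) + (2 * (M div 8) + 1) * (M div 8)) < real_of_int ((M + 1)\<^sup>2)"
proof -
  define H where "H = real_of_int (M div 8)"
  define N where "N = real_of_int M"
  have "0 \<le> sqrt l" by simp
  then have "0 \<le> N" unfolding N_def using assms by linarith
  have H: "0 \<le> H" "H \<le> N / 8" unfolding H_def N_def using \<open>0 \<le> N\<close> real_of_int_div4[of M 8] by (simp_all add: N_def)
  have "(49 * sqrt l)\<^sup>2 \<le> (10 * N)\<^sup>2" using assms \<open>0 \<le> sqrt l\<close> unfolding N_def by (intro power_mono) auto
  then have "2401 * real l \<le> 100 * (N * N)" by (simp add: power_mult_distrib power2_eq_square)
  moreover have "N * H \<le> N * (N / 8)" using H \<open>0 \<le> N\<close> by (intro mult_left_mono) auto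
  moreover have "H * H \<le> (N / 8) * (N / 8)" using H by (intro mult_mono) auto
  moreover have "0 \<le> N * N" by simp
  moreover have "real_of_int ((M + 1)\<^sup>2) = N * N + 2 * N + 1" unfolding N_def by (simp add: power2_eq_square algebra_simps)
  moreover have "real_of_int (4 * M * (M div 8) + (2 * (M div 8) + 1) * (M div 8)) = 4 * (N * H) + 2 * (H * H) + H"
    unfolding N_def H_def by (simp add: algebra_simps)
  ultimately show ?thesis using H \<open>0 \<le> N\<close> by linarith
qed

theorem (in residue_subgroup) window_not_subset:
  fixes l :: nat
  assumes card: "card (G \<inter> {0..<p}) \<le> l" and "2 * l < p" "3025 \<le> l"
  shows "\<not> {x..x + \<lfloor>10 * sqrt l\<rfloor>} \<subseteq> G"
proof
  define m where "m = \<lfloor>10 * sqrt l\<rfloor>"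
  assume "{x..x + \<lfloor>10 * sqrt l\<rfloor>} \<subseteq> G"
  then have window: "{x..x + m} \<subseteq> G" unfolding m_def .
  have "55 \<le> sqrt l" using assms(3) by (simp add: real_le_rsqrt)
  have m: "10 * sqrt l - 1 < m" "m \<le> 10 * sqrt l" unfolding m_def by linarith+
  show False
  proof (cases "2 * (p - 1) \<le> m * (m - 4)")
    case True
    have "0 < m" using m \<open>55 \<le> sqrt l\<close> by linarith
    then have "{1..<p} \<subseteq> G \<inter> {0..<p}" using window_subset_imp_units_subset[OF window _ True] by auto
    then have "card {1..<p} \<le> l" using card card_mono[of "G \<inter> {0..<p}" "{1..<p}"] by auto
    then show False using assms(2,3) by simp
  next
    case False
    define M where "M = (m - 9) div 2"
    have M: "m - 10 \<le> 2 * M" "2 * M \<le> m - 9" unfolding M_def by linarith+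
    have "0 \<le> M" using M m \<open>55 \<le> sqrt l\<close> by linarith
    have "2 * M * M < p" unfolding M_def using False m \<open>55 \<le> sqrt l\<close> by (intro half_window_square_less) auto
    have "{x..x + M} \<subseteq> G" using window M \<open>0 \<le> M\<close> by auto
    from window_subset_imp_count_bound[OF this \<open>0 \<le> M\<close> \<open>2 * M * M < p\<close>, of 8]
    have "real_of_int ((M + 1)\<^sup>2) \<le> 8 * real l + real_of_int (4 * M * (M div 8) + (2 * (M div 8) + 1) * (M div 8))"
      using card by simp
    moreover have "49 * sqrt l \<le> 10 * M" using M m \<open>55 \<le> sqrt l\<close> by linarith
    ultimately show False using window_count_bound_fails by fastforce
  qed
qed

lemma residue_subgroup_roots_of_unity:
  fixes p :: int
  assumes "prime p" "0 < l"
  shows "residue_subgroup p {y. [y ^ l = 1] (mod p)}"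
proof
  fix a b :: int
  assume "a \<in> {y. [y ^ l = 1] (mod p)}"
  then have a: "[a ^ l = 1] (mod p)" by simp
  show "b \<in> {y. [y ^ l = 1] (mod p)}" if "[a = b] (mod p)"
    using cong_trans[OF cong_pow[OF cong_sym[OF that]] a] by simp
  show "b \<in> {y. [y ^ l = 1] (mod p)}" if "a * b \<in> {y. [y ^ l = 1] (mod p)}"
  proof -
    have "[b ^ l = a ^ l * b ^ l] (mod p)" using cong_sym[OF cong_scalar_right[OF a, of "b ^ l"]] by simp
    then show ?thesis using cong_trans that by (simp add: power_mult_distrib)
  qed
  show "\<not> p dvd a"
  proof
    assume "p dvd a"
    then have "p dvd a ^ l" using assms(2) by (simp add: dvd_trans)
    then have "p dvd 1" using cong_dvd_iff[OF a] by simp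
    then show False using assms(1) by (simp add: not_prime_unit)
  qed
qed (rule assms(1))

lemma card_roots_of_unity_le:
  fixes p l :: nat
  assumes "prime p" "0 < l"
  shows "card ({y :: int. [y ^ l = 1] (mod int p)} \<inter> {0..<int p}) \<le> l"
proof -
  have "{y :: int. [y ^ l = 1] (mod int p)} \<inter> {0..<int p} = int ` {y \<in> {..<p}. [y ^ l = 1] (mod p)}"
  proof (intro equalityI subsetI)
    fix y :: int assume "y \<in> {y. [y ^ l = 1] (mod int p)} \<inter> {0..<int p}"
    moreover obtain n where "y = int n" using calculation nonneg_int_cases by auto
    ultimately show "y \<in> int ` {y \<in> {..<p}. [y ^ l = 1] (mod p)}"
      by (auto simp flip: cong_int_iff)
  qed (auto simp flip: cong_int_iff)
  moreover have "card {y \<in> {..<p}. [y ^ l = 1] (mod p)} \<le> l" using roots_mod_prime_bound[OF assms] by simp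
  ultimately show ?thesis by (simp add: card_image)
qed

theorem claim2p5:
  shows "\<exists>N0 L0 :: nat. \<forall>(N::nat) (l::nat). N \<ge> N0 \<longrightarrow> l \<ge> L0 \<longrightarrow>
           (\<exists>p::nat. prime p \<and> p dvd N \<and> p > 2 * l) \<longrightarrow>
           (\<forall>a::int. \<exists>j::nat. real j \<le> 10 * sqrt (real l) \<and>
                \<not> [(a + int j) ^ l = 1] (mod (int N)))"
proof (rule exI[of _ 0], rule exI[of _ 3025], intro allI impI)
  fix N l :: nat and a :: int
  assume "0 \<le> N" "3025 \<le> l" and "\<exists>p::nat. prime p \<and> p dvd N \<and> p > 2 * l"
  then obtain p :: nat where p: "prime p" "p dvd N" "2 * l < p" by blast
  interpret roots: residue_subgroup "int p" "{y. [y ^ l = 1] (mod int p)}"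
    using p \<open>3025 \<le> l\<close> by (intro residue_subgroup_roots_of_unity) auto
  have "\<not> {a..a + \<lfloor>10 * sqrt l\<rfloor>} \<subseteq> {y. [y ^ l = 1] (mod int p)}"
    using card_roots_of_unity_le p \<open>3025 \<le> l\<close> by (intro roots.window_not_subset) auto
  then obtain b where b: "a \<le> b" "b \<le> a + \<lfloor>10 * sqrt l\<rfloor>" "\<not> [b ^ l = 1] (mod int p)"
    unfolding subset_iff atLeastAtMost_iff mem_Collect_eq by blast
  have "real (nat (b - a)) \<le> 10 * sqrt l" using b(1,2) by linarith
  moreover have "\<not> [(a + int (nat (b - a))) ^ l = 1] (mod int N)"
    using b(1,3) cong_dvd_modulus[of "b ^ l" 1 "int N" "int p"] p(2) by auto
  ultimately show "\<exists>j::nat. real j \<le> 10 * sqrt (real l) \<and> \<not> [(a + int j) ^ l = 1] (mod (int N))"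
    by blast
qed

end
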